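(* The following identity of formal series holds: $$\frac{\prod_{i=0}^\infty(1+zq^i)\prod_{i=1}^\infty(1+z^{-1}q^i)}{\prod_{i=0}^\infty(1-z^{-1}q^i)\prod_{i=1}^\infty(1-zq^i)}=\frac{\prod_{i=1}^\infty(1+z^2q^i)\prod_{i=1}^\infty(1+z^{-2}q^i)}{\prod_{i=1}^\infty(1-q^i)^2}\Bigl(1+(1+z^2)\sum_{r=1}^\infty\Bigl[\frac{z^{-r}}{1+z^2q^r}+\frac{q^rz^{r-2}}{1+z^{-2}q^r}\Bigr]\Bigr).$$ Here both sides are regarded as formal power series in $q$ whose coefficients are Laurent series in $z^{-1}$. The factor $1/(1-z^{-1})$ is expanded as $\sum_{n\ge0}z^{-n}$, and all other factors are expanded in powers of $q$. *)

theory Defs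
  imports "HOL-Computational_Algebra.Formal_Laurent_Series"
begin

text \<open>Formal series in q whose coefficients are Laurent series in w = z^(-1):
  type 'a fls fps.  The coefficient ring 'a fls carries the w-adic topology
  (library metric on fls).\<close>

definition qz_tendsto :: "(nat \<Rightarrow> 'a::field fls fps) \<Rightarrow> 'a fls fps \<Rightarrow> bool" where
  "qz_tendsto S L \<longleftrightarrow> (\<forall>n. (\<lambda>m. fps_nth (S m) n) \<longlonglongrightarrow> fps_nth L n)"

definition qz_lim :: "(nat \<Rightarrow> 'a::field fls fps) \<Rightarrow> 'a fls fps" where
  "qz_lim S = (THE L. qz_tendsto S L)"

definition qz_prodinf :: "(nat \<Rightarrow> 'a::field fls fps) \<Rightarrow> 'a fls fps" where
  "qz_prodinf f = qz_lim (\<lambda>N. \<Prod>i<N. f i)"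

definition qz_suminf :: "(nat \<Rightarrow> 'a::field fls fps) \<Rightarrow> 'a fls fps" where
  "qz_suminf f = qz_lim (\<lambda>N. \<Sum>i<N. f i)"

definition zpow :: "int \<Rightarrow> 'a::field fls fps" where
  "zpow k = fps_const (fls_X_inv powi k)"

end

(*
  Write w = 1/z and (x;q)_N for the q-Pochhammer product. The theorem is a rearrangement of
    (-z;q)_oo (-wq;q)_oo / ((-z^2;q)_oo (-w^2 q;q)_oo)
      = (w;q)_oo (zq;q)_oo / (q;q)_oo^2 * (1/(1 + z^2) + S),
  where S is the series in the statement. This is the limit of a finite identity: with
  b = -z^2 q^(-N), w^N times the left-hand side truncated at N is the product of
  (1 - w b q^i)/(1 - b q^i) over i < 2N. Partial fractions in b turn this into w^(2N) plus
  2N simple fractions whose residues are again quotients of finite q-Pochhammer products;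
  this finite identity holds in any field.

  As N tends to infinity these quotients tend to (w;q)_oo (zq;q)_oo / (q;q)_oo^2 and the
  simple fractions become the terms of S. The series S converges only w-adically: the
  q^m-coefficient of z^(-r)/(1 + z^2 q^r) has w-order at least r - 2m. So the error terms
  are controlled through lower bounds for the w-orders of the first q-coefficients.
*)

theory Submission
  imports Defs
begin

unbundle fps_syntax


section \<open>Orders of coefficients in the variable \<open>w\<close>\<close>

definition fls_ord_ge :: "'a::zero fls \<Rightarrow> int \<Rightarrow> bool" where
  "fls_ord_ge u e \<longleftrightarrow> (\<forall>j<e. u $$ j = 0)"

lemma fls_ord_ge_iff: "fls_ord_ge u e \<longleftrightarrow> u = 0 \<or> e \<le> fls_subdegree u"
proof
  assume u: "fls_ord_ge u e"
  show "u = 0 \<or> e \<le> fls_subdegree u"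
  proof (rule ccontr)
    assume "\<not> (u = 0 \<or> e \<le> fls_subdegree u)"
    with u have "u \<noteq> 0" "u $$ fls_subdegree u = 0" by (auto simp: fls_ord_ge_def)
    then show False using nth_fls_subdegree_nonzero by blast
  qed
next
  assume "u = 0 \<or> e \<le> fls_subdegree u"
  then show "fls_ord_ge u e"
    unfolding fls_ord_ge_def using fls_eq0_below_subdegree by fastforce
qed

lemma fls_ord_ge_0 [simp]: "fls_ord_ge 0 e"
  by (simp add: fls_ord_ge_def)

lemma fls_ord_ge_mono: "fls_ord_ge u e \<Longrightarrow> e' \<le> e \<Longrightarrow> fls_ord_ge u e'"
  by (simp add: fls_ord_ge_def)

lemma fls_ord_ge_add: "fls_ord_ge u e \<Longrightarrow> fls_ord_ge v e \<Longrightarrow> fls_ord_ge (u + v) e"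
  by (simp add: fls_ord_ge_def)

lemma fls_ord_ge_diff:
  "fls_ord_ge u e \<Longrightarrow> fls_ord_ge v e \<Longrightarrow> fls_ord_ge (u - v :: 'a::group_add fls) e"
  by (simp add: fls_ord_ge_def)

lemma fls_ord_ge_uminus: "fls_ord_ge u e \<Longrightarrow> fls_ord_ge (- u :: 'a::group_add fls) e"
  by (simp add: fls_ord_ge_def)

lemma fls_ord_ge_sum: "(\<And>i. i \<in> S \<Longrightarrow> fls_ord_ge (f i) e) \<Longrightarrow> fls_ord_ge (\<Sum>i\<in>S. f i) e"
  by (induction S rule: infinite_finite_induct) (auto intro: fls_ord_ge_add)

lemma fls_ord_ge_mult:
  "fls_ord_ge u e1 \<Longrightarrow> fls_ord_ge v e2 \<Longrightarrow> fls_ord_ge (u * v :: 'a::semiring_no_zero_divisors fls) (e1 + e2)"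
  unfolding fls_ord_ge_iff by (cases "u = 0 \<or> v = 0") auto

lemma fls_ord_ge_X_power: "fls_ord_ge (fls_X ^ n :: 'a::semiring_1 fls) (int n)"
  by (simp add: fls_ord_ge_iff)

lemma dist_fls_le_iff_ord_ge:
  fixes a b :: "'a::group_add fls"
  shows "dist a b \<le> inverse (2 ^ k) \<longleftrightarrow> fls_ord_ge (a - b) (int k)"
proof (cases "a = b")
  case False
  then have "a - b \<noteq> 0" by simp
  show ?thesis
  proof (cases "fls_subdegree (a - b) \<ge> 0")
    case True
    then have "dist a b = inverse (2 ^ nat (fls_subdegree (a - b)))"
      using False by (simp add: dist_fls_def)
    moreover have "inverse (2 ^ nat d) \<le> (inverse (2 ^ k) :: real) \<longleftrightarrow> k \<le> nat d" for d
      by (simp add: le_imp_inverse_le)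
    ultimately show ?thesis using True \<open>a - b \<noteq> 0\<close> by (simp add: fls_ord_ge_iff le_nat_iff)
  next
    case neg: False
    define d where "d = nat (- fls_subdegree (a - b))"
    have "d > 0" "dist a b = 2 ^ d"
      using False neg by (simp_all add: d_def dist_fls_def)
    have "inverse (2 ^ k) \<le> (1 :: real)" by (simp add: inverse_le_1_iff)
    also have "1 < (2 ^ d :: real)" using \<open>d > 0\<close> by simp
    finally have "\<not> dist a b \<le> inverse (2 ^ k)" using \<open>dist a b = 2 ^ d\<close> by simp
    moreover have "\<not> fls_ord_ge (a - b) (int k)"
      using neg \<open>a - b \<noteq> 0\<close> by (simp add: fls_ord_ge_iff)
    ultimately show ?thesis by blast
  qed
qed simp


definition eq_below :: "nat \<Rightarrow> 'a fps \<Rightarrow> 'a fps \<Rightarrow> bool" where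
  "eq_below M F G \<longleftrightarrow> (\<forall>m<M. F $ m = G $ m)"

lemma eq_below_refl [simp]: "eq_below M F F"
  by (simp add: eq_below_def)

lemma eq_below_sym: "eq_below M F G \<Longrightarrow> eq_below M G F"
  by (simp add: eq_below_def)

lemma eq_below_trans: "eq_below M F G \<Longrightarrow> eq_below M G H \<Longrightarrow> eq_below M F H"
  by (simp add: eq_below_def)

lemma eq_below_mono: "eq_below M F G \<Longrightarrow> M' \<le> M \<Longrightarrow> eq_below M' F G"
  by (simp add: eq_below_def)

lemma eq_below_add: "eq_below M F G \<Longrightarrow> eq_below M F' G' \<Longrightarrow> eq_below M (F + F') (G + G')"
  by (simp add: eq_below_def)

lemma eq_below_diff:
  "eq_below M F G \<Longrightarrow> eq_below M F' G' \<Longrightarrow> eq_below M (F - F' :: 'a::group_add fps) (G - G')"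
  by (simp add: eq_below_def)

lemma eq_below_iff_diff: "eq_below M F G \<longleftrightarrow> eq_below M (F - G :: 'a::group_add fps) 0"
  by (simp add: eq_below_def)

lemma eq_below_mult:
  "eq_below M F G \<Longrightarrow> eq_below M F' G' \<Longrightarrow> eq_below M (F * F' :: 'a::semiring_0 fps) (G * G')"
  unfolding eq_below_def fps_mult_nth by (auto intro!: sum.cong)

lemma eq_below_mult_zero:
  "eq_below M F 0 \<Longrightarrow> eq_below M (F * G :: 'a::semiring_0 fps) 0"
  "eq_below M F 0 \<Longrightarrow> eq_below M (G * F :: 'a::semiring_0 fps) 0"
  using eq_below_mult[OF _ eq_below_refl, of M F 0 G] eq_below_mult[OF eq_below_refl, of M F 0 G]
  by simp_all

lemma eq_below_inverse:
  fixes F G :: "'a::field fps"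
  assumes "eq_below M F G" "F $ 0 \<noteq> 0"
  shows "eq_below M (inverse F) (inverse G)"
proof (cases M)
  case (Suc M')
  then have "G $ 0 \<noteq> 0" using assms by (simp add: eq_below_def)
  have "eq_below M (inverse F * G * inverse G) (inverse F * F * inverse G)"
    by (intro eq_below_mult eq_below_sym[OF assms(1)] eq_below_refl)
  then show ?thesis
    using assms(2) \<open>G $ 0 \<noteq> 0\<close> by (simp add: mult.assoc inverse_mult_eq_1 inverse_mult_eq_1')
qed (simp add: eq_below_def)

lemma eq_below_all_imp_eq: "(\<And>M. eq_below M F G) \<Longrightarrow> F = G"
  unfolding eq_below_def by (metis fps_ext lessI)

lemma eq_below_mult_X_power: "M \<le> k \<Longrightarrow> eq_below M (F * fps_X ^ k :: 'a::comm_semiring_1 fps) 0"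
  by (auto simp: eq_below_def fps_X_power_mult_right_nth)

lemma eq_below_prod_one:
  "(\<And>j. j \<in> S \<Longrightarrow> eq_below M (f j) 1) \<Longrightarrow> eq_below M (\<Prod>j\<in>S. f j :: 'a::comm_semiring_1 fps) 1"
proof (induction S rule: infinite_finite_induct)
  case (insert x S)
  then have "eq_below M (f x * (\<Prod>j\<in>S. f j)) (1 * 1)" by (intro eq_below_mult) auto
  with insert show ?case by simp
qed auto

lemma eq_below_sum_zero:
  "(\<And>j. j \<in> S \<Longrightarrow> eq_below M (f j) 0) \<Longrightarrow> eq_below M (\<Sum>j\<in>S. f j :: 'a::comm_monoid_add fps) 0"
proof (induction S rule: infinite_finite_induct)
  case (insert x S)
  then have "eq_below M (f x + (\<Sum>j\<in>S. f j)) (0 + 0)" by (intro eq_below_add) auto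
  with insert show ?case by simp
qed auto


section \<open>Linear lower bounds for the orders of the coefficients\<close>

definition ord_above_line :: "'a::zero fls fps \<Rightarrow> int \<Rightarrow> int \<Rightarrow> bool" where
  "ord_above_line F c s \<longleftrightarrow> (\<forall>m. fls_ord_ge (F $ m) (c - s * int m))"

lemma ord_above_line_const: "fls_ord_ge a c \<Longrightarrow> ord_above_line (fps_const a) c s"
  by (auto simp: ord_above_line_def)

lemma ord_above_line_1: "c \<le> 0 \<Longrightarrow> ord_above_line (1 :: 'a::zero_neq_one fls fps) c s"
  using ord_above_line_const[of "1 :: 'a fls" c s] by (simp add: fls_ord_ge_iff)

lemma ord_above_line_monom:
  "fls_ord_ge a (- s * int k) \<Longrightarrow> ord_above_line (fps_const a * fps_X ^ k :: 'a::comm_ring_1 fls fps) 0 s"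
  by (auto simp: ord_above_line_def fps_X_power_mult_right_nth)

lemma ord_above_line_add:
  "ord_above_line F c s \<Longrightarrow> ord_above_line G c s \<Longrightarrow> ord_above_line (F + G) c s"
  by (simp add: ord_above_line_def fls_ord_ge_add)

lemma ord_above_line_diff:
  "ord_above_line F c s \<Longrightarrow> ord_above_line G c s \<Longrightarrow> ord_above_line (F - G :: 'a::group_add fls fps) c s"
  by (simp add: ord_above_line_def fls_ord_ge_diff)

lemma ord_above_line_mult:
  fixes F G :: "'a::{comm_semiring_0,semiring_no_zero_divisors} fls fps"
  assumes F: "ord_above_line F c1 s" and G: "ord_above_line G c2 s"
  shows "ord_above_line (F * G) (c1 + c2) s"
  unfolding ord_above_line_def fps_mult_nth
proof (intro allI fls_ord_ge_sum)
  fix m i :: nat assume i: "i \<in> {0..m}"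
  have "fls_ord_ge (F $ i * G $ (m - i)) ((c1 - s * int i) + (c2 - s * int (m - i)))"
    using F G by (intro fls_ord_ge_mult) (auto simp: ord_above_line_def)
  moreover have "(c1 - s * int i) + (c2 - s * int (m - i)) = c1 + c2 - s * int m"
    using i by (simp add: of_nat_diff algebra_simps)
  ultimately show "fls_ord_ge (F $ i * G $ (m - i)) (c1 + c2 - s * int m)" by simp
qed

lemma ord_above_line_prod:
  "(\<And>i. i \<in> S \<Longrightarrow> ord_above_line (f i) 0 s) \<Longrightarrow>
     ord_above_line (\<Prod>i\<in>S. f i :: 'a::{comm_semiring_1,semiring_no_zero_divisors} fls fps) 0 s"
proof (induction S rule: infinite_finite_induct)
  case (insert x S)
  then show ?case using ord_above_line_mult[of "f x" 0 s "\<Prod>i\<in>S. f i" 0] by simp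
qed (auto intro: ord_above_line_1)

lemma ord_above_line_inverse:
  fixes F :: "'a::field fls fps"
  assumes F0: "F $ 0 = 1" and F: "ord_above_line F 0 s" and "s \<ge> 0"
  shows "ord_above_line (inverse F) 0 s"
  unfolding ord_above_line_def
proof
  fix m
  show "fls_ord_ge (inverse F $ m) (0 - s * int m)"
  proof (induction m rule: less_induct)
    case (less m)
    show ?case
    proof (cases m)
      case 0
      then show ?thesis using F0 by (simp add: fls_ord_ge_iff)
    next
      case (Suc m')
      have "inverse F $ m = - (\<Sum>i\<in>{1..m}. F $ i * inverse F $ (m - i))"
        using F0 Suc by (simp add: fps_inverse_def)
      also have "fls_ord_ge \<dots> (0 - s * int m)"
      proof (intro fls_ord_ge_uminus fls_ord_ge_sum)
        fix i assume i: "i \<in> {1..m}"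
        have "fls_ord_ge (F $ i * inverse F $ (m - i)) ((0 - s * int i) + (0 - s * int (m - i)))"
          using F i less[of "m - i"] unfolding ord_above_line_def by (intro fls_ord_ge_mult) auto
        then show "fls_ord_ge (F $ i * inverse F $ (m - i)) (0 - s * int m)"
          using i by (simp add: of_nat_diff algebra_simps)
      qed
      finally show ?thesis .
    qed
  qed
qed

lemma ord_above_line_limit:
  "(\<And>N. eq_below N (P N) G) \<Longrightarrow> (\<And>N. ord_above_line (P N) c s) \<Longrightarrow> ord_above_line G c s"
  unfolding ord_above_line_def eq_below_def by (metis lessI)

definition ord_ge_upto :: "nat \<Rightarrow> int \<Rightarrow> 'a::zero fls fps \<Rightarrow> bool" where
  "ord_ge_upto n d F \<longleftrightarrow> (\<forall>m\<le>n. fls_ord_ge (F $ m) d)"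

lemma ord_ge_upto_add: "ord_ge_upto n d F \<Longrightarrow> ord_ge_upto n d G \<Longrightarrow> ord_ge_upto n d (F + G)"
  by (simp add: ord_ge_upto_def fls_ord_ge_add)

lemma ord_ge_upto_diff:
  "ord_ge_upto n d F \<Longrightarrow> ord_ge_upto n d G \<Longrightarrow> ord_ge_upto n d (F - G :: 'a::group_add fls fps)"
  by (simp add: ord_ge_upto_def fls_ord_ge_diff)

lemma ord_ge_upto_sum:
  "(\<And>i. i \<in> S \<Longrightarrow> ord_ge_upto n d (f i)) \<Longrightarrow> ord_ge_upto n d (\<Sum>i\<in>S. f i)"
  unfolding ord_ge_upto_def by (auto simp: fps_sum_nth intro!: fls_ord_ge_sum)

lemma ord_ge_upto_const: "fls_ord_ge a d \<Longrightarrow> ord_ge_upto n d (fps_const a)"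
  by (auto simp: ord_ge_upto_def)

lemma ord_ge_upto_if_eq_below: "eq_below M F 0 \<Longrightarrow> n < M \<Longrightarrow> ord_ge_upto n d F"
  by (auto simp: ord_ge_upto_def eq_below_def)

lemma ord_ge_upto_if_above_line:
  "ord_above_line F c s \<Longrightarrow> d \<le> c - s * int n \<Longrightarrow> s \<ge> 0 \<Longrightarrow> ord_ge_upto n d F"
  unfolding ord_ge_upto_def ord_above_line_def
  by (meson fls_ord_ge_mono order_trans diff_left_mono mult_left_mono of_nat_le_iff)

lemma ord_ge_upto_mult:
  fixes F G :: "'a::{comm_semiring_0,semiring_no_zero_divisors} fls fps"
  assumes "ord_ge_upto n d F" "ord_above_line G c s" "s \<ge> 0"
  shows "ord_ge_upto n (d + c - s * int n) (G * F)"
  unfolding ord_ge_upto_def fps_mult_nth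
proof (intro allI impI fls_ord_ge_sum)
  fix m i :: nat assume m: "m \<le> n" and i: "i \<in> {0..m}"
  have "fls_ord_ge (G $ i * F $ (m - i)) ((c - s * int i) + d)"
    using assms m i unfolding ord_ge_upto_def ord_above_line_def by (intro fls_ord_ge_mult) auto
  moreover have "d + c - s * int n \<le> (c - s * int i) + d"
    using m i assms(3) by (simp add: mult_left_mono)
  ultimately show "fls_ord_ge (G $ i * F $ (m - i)) (d + c - s * int n)"
    by (rule fls_ord_ge_mono)
qed


section \<open>Convergence of series in \<open>q\<close> over Laurent series in \<open>w\<close>\<close>

lemma fls_tendsto_iff_ord_ge:
  fixes X :: "nat \<Rightarrow> 'a::group_add fls"
  shows "X \<longlonglongrightarrow> l \<longleftrightarrow> (\<forall>k. \<forall>\<^sub>F N in sequentially. fls_ord_ge (X N - l) (int k))"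
proof
  assume lim: "X \<longlonglongrightarrow> l"
  show "\<forall>k. \<forall>\<^sub>F N in sequentially. fls_ord_ge (X N - l) (int k)"
  proof
    fix k :: nat
    have "\<forall>\<^sub>F N in sequentially. dist (X N) l < inverse (2 ^ k)"
      using lim by (rule tendstoD) simp
    then show "\<forall>\<^sub>F N in sequentially. fls_ord_ge (X N - l) (int k)"
      by (rule eventually_mono) (simp add: dist_fls_le_iff_ord_ge[symmetric])
  qed
next
  assume ord: "\<forall>k. \<forall>\<^sub>F N in sequentially. fls_ord_ge (X N - l) (int k)"
  show "X \<longlonglongrightarrow> l"
  proof (rule tendstoI)
    fix e :: real assume "e > 0"
    then obtain k :: nat where "(1/2) ^ k < e" using real_arch_pow_inv[of e "1/2"] by auto
    then have k: "inverse (2 ^ k) < e" by (simp add: power_one_over inverse_eq_divide)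
    have "\<forall>\<^sub>F N in sequentially. dist (X N) l \<le> inverse (2 ^ k)"
      using ord by (simp add: dist_fls_le_iff_ord_ge)
    then show "\<forall>\<^sub>F N in sequentially. dist (X N) l < e"
      by (rule eventually_mono) (use k in linarith)
  qed
qed

lemma qz_tendsto_iff:
  "qz_tendsto S L \<longleftrightarrow> (\<forall>n d. \<forall>\<^sub>F N in sequentially. ord_ge_upto n (int d) (S N - L))"
proof -
  have "(\<forall>\<^sub>F N in sequentially. ord_ge_upto n (int d) (S N - L)) \<longleftrightarrow>
        (\<forall>m\<le>n. \<forall>\<^sub>F N in sequentially. fls_ord_ge (S N $ m - L $ m) (int d))" for n d
    unfolding ord_ge_upto_def fps_sub_nth atMost_iff[symmetric] Ball_def[symmetric]
    by (rule eventually_ball_finite_distrib) simp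
  then show ?thesis
    unfolding qz_tendsto_def fls_tendsto_iff_ord_ge by blast
qed

lemma qz_tendsto_unique: "qz_tendsto S L1 \<Longrightarrow> qz_tendsto S L2 \<Longrightarrow> L1 = L2"
  unfolding qz_tendsto_def by (metis LIMSEQ_unique fps_ext)

lemma qz_lim_eq: "qz_tendsto S L \<Longrightarrow> qz_lim S = L"
  unfolding qz_lim_def using qz_tendsto_unique by blast

lemma qz_tendsto_if_eq_below:
  assumes "\<And>N. eq_below N (S N) L"
  shows "qz_tendsto S L"
  unfolding qz_tendsto_def
proof
  fix n
  have "\<forall>\<^sub>F N in sequentially. S N $ n = L $ n"
    using assms by (intro eventually_sequentiallyI[of "Suc n"]) (auto simp: eq_below_def)
  then show "(\<lambda>N. S N $ n) \<longlonglongrightarrow> L $ n"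
    by (rule tendsto_eventually)
qed

lemma qz_tendsto_add:
  fixes S T :: "nat \<Rightarrow> 'a::field fls fps"
  assumes "qz_tendsto S L" "qz_tendsto T M"
  shows "qz_tendsto (\<lambda>N. S N + T N) (L + M)"
  unfolding qz_tendsto_iff
proof (intro allI)
  fix n d
  have "\<forall>\<^sub>F N in sequentially. ord_ge_upto n (int d) (S N - L) \<and> ord_ge_upto n (int d) (T N - M)"
    using assms unfolding qz_tendsto_iff by (simp add: eventually_conj_iff)
  then show "\<forall>\<^sub>F N in sequentially. ord_ge_upto n (int d) (S N + T N - (L + M))"
    by (rule eventually_mono) (simp add: add_diff_add ord_ge_upto_add)
qed

lemma eq_below_qz_lim:
  assumes "\<And>N N'. N \<le> N' \<Longrightarrow> eq_below N (S N) (S N')"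
  shows "eq_below N (S N) (qz_lim S)"
proof -
  define L where "L = Abs_fps (\<lambda>n. S (Suc n) $ n)"
  have "eq_below N (S N) L" for N
    unfolding eq_below_def
  proof (intro allI impI)
    fix m assume "m < N"
    then have "eq_below (Suc m) (S (Suc m)) (S N)" using assms by simp
    then show "S N $ m = L $ m" by (simp add: eq_below_def L_def)
  qed
  moreover from this have "qz_lim S = L"
    by (intro qz_lim_eq qz_tendsto_if_eq_below)
  ultimately show ?thesis by simp
qed

lemma eq_below_qz_prodinf:
  assumes "\<And>j. eq_below j (f j) 1"
  shows "eq_below N (\<Prod>j<N. f j) (qz_prodinf f)"
  unfolding qz_prodinf_def
proof (rule eq_below_qz_lim)
  fix N N' :: nat assume "N \<le> N'"
  then have "(\<Prod>j<N'. f j) = (\<Prod>j<N. f j) * (\<Prod>j\<in>{N..<N'}. f j)"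
    using prod.atLeastLessThan_concat[of 0 N N' f] by (simp add: atLeast0LessThan)
  moreover have tail: "eq_below N (\<Prod>j\<in>{N..<N'}. f j) 1"
    by (rule eq_below_prod_one) (auto intro: eq_below_mono[OF assms])
  ultimately show "eq_below N (\<Prod>j<N. f j) (\<Prod>j<N'. f j)"
    using eq_below_mult[OF eq_below_refl eq_below_sym[OF tail], of "\<Prod>j<N. f j"] by simp
qed

lemma eq_below_qz_suminf:
  assumes "\<And>j. eq_below j (f j) 0"
  shows "eq_below N (\<Sum>j<N. f j) (qz_suminf f)"
  unfolding qz_suminf_def
proof (rule eq_below_qz_lim)
  fix N N' :: nat assume "N \<le> N'"
  then have "(\<Sum>j<N'. f j) = (\<Sum>j<N. f j) + (\<Sum>j\<in>{N..<N'}. f j)"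
    using sum.atLeastLessThan_concat[of 0 N N' f] by (simp add: atLeast0LessThan)
  moreover have tail: "eq_below N (\<Sum>j\<in>{N..<N'}. f j) 0"
    by (rule eq_below_sum_zero) (auto intro: eq_below_mono[OF assms])
  ultimately show "eq_below N (\<Sum>j<N. f j) (\<Sum>j<N'. f j)"
    using eq_below_add[OF eq_below_refl eq_below_sym[OF tail], of "\<Sum>j<N. f j"] by simp
qed


section \<open>Partial fractions\<close>

lemma (in comm_monoid_set) lessThan_add_split:
  fixes m n :: nat
  shows "F g {..<m + n} = F g {..<m} \<^bold>* F (\<lambda>k. g (m + k)) {..<n}"
  by (induction n) (simp_all add: assoc)

lemma (in comm_monoid_set) lessThan_remove_split:
  assumes "i < M"
  shows "F g ({..<M} - {i}) = F g {..<i} \<^bold>* F (\<lambda>k. g (Suc i + k)) {..<M - Suc i}"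
proof -
  have "{..<M} - {i} = {..<i} \<union> {Suc i..<M}"
    using assms by auto
  moreover have "F g {Suc i..<M} = F (\<lambda>k. g (Suc i + k)) {..<M - Suc i}"
    using shift_bounds_nat_ivl[of g 0 "Suc i" "M - Suc i"] assms
    by (simp add: atLeast0LessThan add.commute)
  moreover have "F g ({..<i} \<union> {Suc i..<M}) = F g {..<i} \<^bold>* F g {Suc i..<M}"
    by (rule union_disjoint) auto
  ultimately show ?thesis
    by simp
qed

lemma degree_coeff_prod_linear:
  fixes c :: "'b \<Rightarrow> 'k::field"
  assumes "finite S"
  shows "degree (\<Prod>i\<in>S. [:1, c i:]) \<le> card S \<and> coeff (\<Prod>i\<in>S. [:1, c i:]) (card S) = (\<Prod>i\<in>S. c i)"
  using assms
proof (induction S rule: finite_induct)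
  case (insert a S)
  let ?P = "\<Prod>i\<in>S. [:1, c i:]"
  have eq: "(\<Prod>i\<in>insert a S. [:1, c i:]) = ?P + pCons 0 (smult (c a) ?P)"
    using insert by (simp add: mult_pCons_left)
  have "degree (?P + pCons 0 (smult (c a) ?P)) \<le> Suc (card S)"
    using insert.IH
    by (intro degree_add_le) (auto intro: order_trans[OF degree_pCons_le] order_trans[OF degree_smult_le])
  moreover have "coeff ?P (Suc (card S)) = 0"
    using insert.IH by (intro coeff_eq_0) auto
  ultimately show ?case using insert eq by simp
qed simp

definition pf_residue :: "(nat \<Rightarrow> 'k::field) \<Rightarrow> 'k \<Rightarrow> nat \<Rightarrow> nat \<Rightarrow> 'k" where
  "pf_residue \<alpha> x M i = (\<Prod>l<M. 1 - x * \<alpha> l / \<alpha> i) / (\<Prod>l\<in>{..<M}-{i}. 1 - \<alpha> l / \<alpha> i)"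

text \<open>Lagrange interpolation at the \<open>M\<close> points \<open>1/\<alpha> i\<close>.\<close>

lemma prod_linear_interpolation:
  fixes \<alpha> :: "nat \<Rightarrow> 'k::field"
  assumes inj: "inj_on \<alpha> {..<M}" and nz: "\<And>i. i < M \<Longrightarrow> \<alpha> i \<noteq> 0"
  shows "(\<Prod>i<M. [:1, - x * \<alpha> i:]) =
           smult (x ^ M) (\<Prod>i<M. [:1, - \<alpha> i:])
         + (\<Sum>i<M. smult (pf_residue \<alpha> x M i) (\<Prod>l\<in>{..<M}-{i}. [:1, - \<alpha> l:]))"
    (is "?P = ?R")
proof (rule poly_eqI_degree_lead_coeff[of _ M _ "(\<lambda>i. inverse (\<alpha> i)) ` {..<M}"])
  let ?Q = "\<Prod>i<M. [:1, - \<alpha> i:]" and ?Qi = "\<lambda>i. \<Prod>l\<in>{..<M}-{i}. [:1, - \<alpha> l:]"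
  have Q: "degree ?Q \<le> M" "coeff ?Q M = (\<Prod>i<M. - \<alpha> i)"
    using degree_coeff_prod_linear[of "{..<M}" "\<lambda>i. - \<alpha> i"] by simp_all
  have Qi: "degree (?Qi i) < M" if "i < M" for i
    using degree_coeff_prod_linear[of "{..<M}-{i}" "\<lambda>i. - \<alpha> i"] that by fastforce
  show "degree ?P \<le> M"
    using degree_coeff_prod_linear[of "{..<M}" "\<lambda>i. - x * \<alpha> i"] by simp
  show "degree ?R \<le> M"
    using Q Qi by (intro degree_add_le order_trans[OF degree_smult_le] degree_sum_le)
       (auto intro: order_trans[OF degree_smult_le] less_imp_le)
  have "coeff ?R M = x ^ M * (\<Prod>i<M. - \<alpha> i)"
    using Qi by (simp add: coeff_sum Q coeff_eq_0)
  also have "x ^ M * (\<Prod>i<M. - \<alpha> i) = (\<Prod>i<M. x * - \<alpha> i)"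
    by (subst prod.distrib) simp
  finally show "coeff ?P M = coeff ?R M"
    using degree_coeff_prod_linear[of "{..<M}" "\<lambda>i. - x * \<alpha> i"] by simp
  show "M \<le> card ((\<lambda>i. inverse (\<alpha> i)) ` {..<M})"
    using inj by (simp add: card_image inj_on_def)
  fix t assume "t \<in> (\<lambda>i. inverse (\<alpha> i)) ` {..<M}"
  then obtain i where i: "i < M" "t = inverse (\<alpha> i)" by auto
  have "poly ?Q t = 0" "\<And>j. j < M \<Longrightarrow> j \<noteq> i \<Longrightarrow> poly (?Qi j) t = 0"
    unfolding poly_prod using i nz by (auto intro!: prod_zero bexI[of _ i])
  then have "poly ?R t = pf_residue \<alpha> x M i * poly (?Qi i) t"
    using i by (simp add: poly_sum sum.remove[of _ i] sum.neutral)
  moreover have "poly (?Qi i) t = (\<Prod>l\<in>{..<M}-{i}. 1 - \<alpha> l / \<alpha> i)"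
    unfolding poly_prod using i by (intro prod.cong) (auto simp: field_simps)
  moreover have "(\<Prod>l\<in>{..<M}-{i}. 1 - \<alpha> l / \<alpha> i) \<noteq> 0"
    using inj i nz by (auto simp: prod_zero_iff inj_on_def field_simps)
  moreover have "poly ?P t = (\<Prod>l<M. 1 - x * \<alpha> l / \<alpha> i)"
    unfolding poly_prod using i by (intro prod.cong) (auto simp: field_simps)
  ultimately show "poly ?P t = poly ?R t"
    by (simp add: pf_residue_def)
qed

lemma partial_fractions:
  fixes \<alpha> :: "nat \<Rightarrow> 'k::field"
  assumes inj: "inj_on \<alpha> {..<M}" and nz: "\<And>i. i < M \<Longrightarrow> \<alpha> i \<noteq> 0"
    and den: "\<And>i. i < M \<Longrightarrow> 1 - b * \<alpha> i \<noteq> 0"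
  shows "(\<Prod>i<M. (1 - x * b * \<alpha> i) / (1 - b * \<alpha> i)) =
           x ^ M + (\<Sum>i<M. pf_residue \<alpha> x M i / (1 - b * \<alpha> i))"
proof -
  define D where "D = (\<Prod>i<M. 1 - b * \<alpha> i)"
  have D: "D = (1 - b * \<alpha> i) * (\<Prod>l\<in>{..<M}-{i}. 1 - b * \<alpha> l)" if "i < M" for i
    using that by (simp add: D_def prod.remove[of _ i])
  have "D \<noteq> 0" using den by (simp add: D_def prod_zero_iff)
  have "(\<Prod>i<M. 1 - x * b * \<alpha> i) =
          x ^ M * D + (\<Sum>i<M. pf_residue \<alpha> x M i * (\<Prod>l\<in>{..<M}-{i}. 1 - b * \<alpha> l))"
    using arg_cong[OF prod_linear_interpolation[OF inj nz, of x], of "\<lambda>p. poly p b"]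
    by (simp add: poly_prod poly_sum D_def algebra_simps)
  then have "(\<Prod>i<M. 1 - x * b * \<alpha> i) / D =
               x ^ M + (\<Sum>i<M. pf_residue \<alpha> x M i * (\<Prod>l\<in>{..<M}-{i}. 1 - b * \<alpha> l) / D)"
    using \<open>D \<noteq> 0\<close> by (simp add: add_divide_distrib sum_divide_distrib)
  also have "(\<Sum>i<M. pf_residue \<alpha> x M i * (\<Prod>l\<in>{..<M}-{i}. 1 - b * \<alpha> l) / D) =
               (\<Sum>i<M. pf_residue \<alpha> x M i / (1 - b * \<alpha> i))"
    using \<open>D \<noteq> 0\<close> by (intro sum.cong) (auto simp: D)
  finally show ?thesis
    by (simp add: D_def prod_dividef)
qed


section \<open>The finite identity\<close>

definition qpoch :: "'a::comm_ring_1 \<Rightarrow> 'a \<Rightarrow> nat \<Rightarrow> 'a" where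
  "qpoch x q n = (\<Prod>m<n. 1 - x * q ^ m)"

definition poch_ratio :: "'a::{comm_ring_1,inverse} \<Rightarrow> 'a \<Rightarrow> 'a \<Rightarrow> nat \<Rightarrow> nat \<Rightarrow> nat \<Rightarrow> nat \<Rightarrow> 'a"
  where "poch_ratio w z q a b c d =
           qpoch w q a * qpoch (z * q) q b * inverse (qpoch q q c * qpoch q q d)"

lemma ratio_shift_inverse:
  fixes w z P :: "'k::field"
  assumes "w * z = 1" "P \<noteq> 0"
  shows "(1 - w / P) / (1 - 1 / P) = w * (1 - z * P) / (1 - P)"
proof (cases "P = 1")
  case False
  with assms show ?thesis by (simp add: field_simps)
qed simp \<comment> \<open>for \<open>P = 1\<close> both sides are \<open>0\<close>, as \<open>x / 0 = 0\<close>\<close>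

lemma pf_residue_geometric:
  fixes q w z :: "'k::field"
  assumes wz: "w * z = 1" and "q \<noteq> 0" and i: "i < M"
  shows "pf_residue (\<lambda>l. q ^ l) w M i = w ^ i * poch_ratio w z q (M - i) i i (M - Suc i)"
proof -
  define f where "f l = 1 - w * q ^ l / q ^ i" for l
  define g where "g l = 1 - q ^ l / q ^ i" for l
  have "(\<Prod>l<M. f l) = (\<Prod>l<i. f l) * (\<Prod>k<M - i. f (i + k))"
    using prod.lessThan_add_split[of f i "M - i"] i by simp
  also have "(\<Prod>k<M - i. f (i + k)) = qpoch w q (M - i)"
    using \<open>q \<noteq> 0\<close> by (simp add: f_def qpoch_def power_add)
  finally have num: "(\<Prod>l<M. f l) = (\<Prod>l<i. f l) * qpoch w q (M - i)" .
  have "(\<Prod>l\<in>{..<M}-{i}. g l) = (\<Prod>l<i. g l) * (\<Prod>k<M - Suc i. g (Suc i + k))"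
    by (rule prod.lessThan_remove_split[OF i])
  also have "(\<Prod>k<M - Suc i. g (Suc i + k)) = qpoch q q (M - Suc i)"
    using \<open>q \<noteq> 0\<close> by (simp add: g_def qpoch_def power_add)
  finally have den: "(\<Prod>l\<in>{..<M}-{i}. g l) = (\<Prod>l<i. g l) * qpoch q q (M - Suc i)" .
  have "(\<Prod>l<i. f l) / (\<Prod>l<i. g l) = (\<Prod>k<i. f (i - Suc k) / g (i - Suc k))"
    by (simp add: prod_dividef prod.nat_diff_reindex)
  also have "\<dots> = (\<Prod>k<i. w * (1 - z * q * q ^ k) / (1 - q * q ^ k))"
  proof (intro prod.cong refl)
    fix k assume "k \<in> {..<i}"
    then have "q ^ (i - Suc k) / q ^ i = 1 / q ^ Suc k"
      using \<open>q \<noteq> 0\<close> by (simp add: power_diff)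
    then have "f (i - Suc k) = 1 - w / q ^ Suc k" "g (i - Suc k) = 1 - 1 / q ^ Suc k"
      by (simp_all add: f_def g_def) (metis times_divide_eq_right mult_1_right)
    then show "f (i - Suc k) / g (i - Suc k) = w * (1 - z * q * q ^ k) / (1 - q * q ^ k)"
      using ratio_shift_inverse[OF wz, of "q ^ Suc k"] \<open>q \<noteq> 0\<close> by (simp add: mult.assoc)
  qed
  also have "\<dots> = w ^ i * qpoch (z * q) q i / qpoch q q i"
    by (simp add: qpoch_def prod.distrib prod_dividef mult.assoc)
  finally have ratio: "(\<Prod>l<i. f l) / (\<Prod>l<i. g l) = w ^ i * qpoch (z * q) q i / qpoch q q i" .
  have "pf_residue (\<lambda>l. q ^ l) w M i = (\<Prod>l<M. f l) / (\<Prod>l\<in>{..<M}-{i}. g l)"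
    by (simp add: pf_residue_def f_def g_def)
  also have "\<dots> = (\<Prod>l<i. f l) / (\<Prod>l<i. g l) * (qpoch w q (M - i) / qpoch q q (M - Suc i))"
    unfolding num den by simp
  finally show ?thesis
    unfolding ratio by (simp add: poch_ratio_def field_simps)
qed

text \<open>\<open>A_term\<close> and \<open>B_term\<close> are the summands \<open>z\<^sup>-\<^sup>r/(1 + z\<^sup>2 q\<^sup>r)\<close> and
  \<open>q\<^sup>r z\<^sup>r\<^sup>-\<^sup>2/(1 + z\<^sup>-\<^sup>2 q\<^sup>r)\<close> of the series, written with \<open>w = z\<^sup>-\<^sup>1\<close> so that only
  natural powers occur.\<close>

definition A_term :: "'a::{comm_ring_1,inverse} \<Rightarrow> 'a \<Rightarrow> 'a \<Rightarrow> nat \<Rightarrow> 'a" where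
  "A_term w z q r = w ^ r * inverse (1 + z\<^sup>2 * q ^ r)"

definition B_term :: "'a::{comm_ring_1,inverse} \<Rightarrow> 'a \<Rightarrow> 'a \<Rightarrow> nat \<Rightarrow> 'a" where
  "B_term w z q r = q ^ r * z ^ r * w\<^sup>2 * inverse (1 + w\<^sup>2 * q ^ r)"

definition finite_lhs :: "'a::{comm_ring_1,inverse} \<Rightarrow> 'a \<Rightarrow> 'a \<Rightarrow> nat \<Rightarrow> 'a" where
  "finite_lhs w z q N = qpoch (- z) q N * qpoch (- (w * q)) q N
                        * inverse (qpoch (- z\<^sup>2) q N * qpoch (- (w\<^sup>2 * q)) q N)"

definition finite_rhs :: "'a::{comm_ring_1,inverse} \<Rightarrow> 'a \<Rightarrow> 'a \<Rightarrow> nat \<Rightarrow> 'a" where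
  "finite_rhs w z q N = w ^ N
     + (\<Sum>k<N. A_term w z q k * poch_ratio w z q (N - k) (N + k) (N + k) (N - Suc k))
     + (\<Sum>k<N. B_term w z q (Suc k) * poch_ratio w z q (N + Suc k) (N - Suc k) (N - Suc k) (N + k))"

lemma ratio_shift_inverse_square:
  fixes w z P :: "'k::field"
  assumes "w * z = 1" "P \<noteq> 0"
  shows "(1 + z / P) / (1 + z\<^sup>2 / P) = w * (1 + w * P) / (1 + w\<^sup>2 * P)"
    and "1 / (1 + z\<^sup>2 / P) = w\<^sup>2 * P / (1 + w\<^sup>2 * P)"
proof -
  have z: "z = inverse w" and "w \<noteq> 0"
    using assms(1) by (auto simp: inverse_unique[symmetric] mult.commute)
  have "1 + z\<^sup>2 / P = (1 + w\<^sup>2 * P) / (w\<^sup>2 * P)" and "1 + z / P = w * (1 + w * P) / (w\<^sup>2 * P)"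
    using \<open>w \<noteq> 0\<close> assms(2) by (simp_all add: z field_simps power2_eq_square)
  then show "(1 + z / P) / (1 + z\<^sup>2 / P) = w * (1 + w * P) / (1 + w\<^sup>2 * P)"
    and "1 / (1 + z\<^sup>2 / P) = w\<^sup>2 * P / (1 + w\<^sup>2 * P)"
    using \<open>w \<noteq> 0\<close> assms(2) by simp_all
qed

lemma power_diff_inverse:
  fixes w z :: "'a::comm_monoid_mult"
  assumes "w * z = 1" "k \<le> N"
  shows "w ^ (N - k) = w ^ N * z ^ k"
proof -
  have "w ^ N = w ^ (N - k) * w ^ k"
    using assms(2) by (simp flip: power_add)
  moreover have "w ^ k * z ^ k = 1"
    by (metis assms(1) power_mult_distrib power_one)
  ultimately show ?thesis
    by (metis mult.assoc mult_1_right)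
qed

text \<open>With \<open>b = -z\<^sup>2/q\<^sup>N\<close>, the \<open>2N\<close> factors \<open>(1 - w b q\<^sup>i)/(1 - b q\<^sup>i)\<close> split
  at \<open>i = N\<close> into those of the truncated left-hand side.\<close>

lemma finite_lhs_as_product:
  fixes q w z :: "'k::field"
  assumes wz: "w * z = 1" and "q \<noteq> 0"
  shows "(\<Prod>i<N + N. (1 - w * - (z\<^sup>2 / q ^ N) * q ^ i) / (1 - - (z\<^sup>2 / q ^ N) * q ^ i))
           = w ^ N * finite_lhs w z q N"
proof -
  define r where "r i = (1 - w * - (z\<^sup>2 / q ^ N) * q ^ i) / (1 - - (z\<^sup>2 / q ^ N) * q ^ i)" for i
  have "w * z\<^sup>2 = z" using wz by (simp add: power2_eq_square mult.assoc[symmetric])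
  then have upper: "r (N + k) = (1 + z * q ^ k) / (1 + z\<^sup>2 * q ^ k)" for k
    using \<open>q \<noteq> 0\<close> by (simp add: r_def power_add mult.assoc[symmetric])
  have lower: "r (N - Suc k) = w * (1 + w * q * q ^ k) / (1 + w\<^sup>2 * q * q ^ k)" if "k < N" for k
  proof -
    have "c * q ^ (N - Suc k) / q ^ N = c / q ^ Suc k" for c
      using that \<open>q \<noteq> 0\<close> by (simp add: power_diff field_simps)
    then have "r (N - Suc k) = (1 + z / q ^ Suc k) / (1 + z\<^sup>2 / q ^ Suc k)"
      using \<open>w * z\<^sup>2 = z\<close> by (simp add: r_def mult.assoc[symmetric])
    then show ?thesis
      using ratio_shift_inverse_square(1)[OF wz, of "q ^ Suc k"] \<open>q \<noteq> 0\<close> by (simp add: mult.assoc)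
  qed
  have "(\<Prod>k<N. r (N - Suc k)) = w ^ N * (qpoch (- (w * q)) q N / qpoch (- (w\<^sup>2 * q)) q N)"
    using lower by (simp add: qpoch_def prod.distrib prod_dividef mult.assoc)
  moreover have "(\<Prod>k<N. r (N + k)) = qpoch (- z) q N / qpoch (- z\<^sup>2) q N"
    by (simp add: upper qpoch_def prod_dividef)
  moreover have "(\<Prod>i<N + N. r i) = (\<Prod>k<N. r (N - Suc k)) * (\<Prod>k<N. r (N + k))"
    by (simp only: prod.lessThan_add_split prod.nat_diff_reindex)
  ultimately have "(\<Prod>i<N + N. r i) = w ^ N * finite_lhs w z q N"
    by (simp add: finite_lhs_def field_simps)
  then show ?thesis by (simp add: r_def)
qed

lemma finite_rhs_as_partial_fractions:
  fixes q w z :: "'k::field"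
  assumes wz: "w * z = 1" and "q \<noteq> 0"
  shows "w ^ (N + N) + (\<Sum>i<N + N. pf_residue (\<lambda>l. q ^ l) w (N + N) i / (1 - - (z\<^sup>2 / q ^ N) * q ^ i))
           = w ^ N * finite_rhs w z q N"
proof -
  define s where "s i = pf_residue (\<lambda>l. q ^ l) w (N + N) i / (1 - - (z\<^sup>2 / q ^ N) * q ^ i)" for i
  have upper: "s (N + k) = w ^ N * (A_term w z q k * poch_ratio w z q (N - k) (N + k) (N + k) (N - Suc k))"
    if "k < N" for k
    using pf_residue_geometric[OF wz \<open>q \<noteq> 0\<close>, of "N + k" "N + N"] that \<open>q \<noteq> 0\<close>
    by (simp add: s_def A_term_def power_add field_simps)
  have lower: "s (N - Suc k) = w ^ N * (B_term w z q (Suc k) *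
                 poch_ratio w z q (N + Suc k) (N - Suc k) (N - Suc k) (N + k))" if "k < N" for k
  proof -
    have "c * q ^ (N - Suc k) / q ^ N = c / q ^ Suc k" for c
      using that \<open>q \<noteq> 0\<close> by (simp add: power_diff field_simps)
    then have factor: "1 / (1 - - (z\<^sup>2 / q ^ N) * q ^ (N - Suc k)) =
                         w\<^sup>2 * q ^ Suc k / (1 + w\<^sup>2 * q ^ Suc k)"
      using ratio_shift_inverse_square(2)[OF wz, of "q ^ Suc k"] \<open>q \<noteq> 0\<close> by simp
    have "w ^ (N - Suc k) = w ^ N * z ^ Suc k"
      using that by (intro power_diff_inverse wz) simp
    then have "pf_residue (\<lambda>l. q ^ l) w (N + N) (N - Suc k) = w ^ N * z ^ Suc k *
                 poch_ratio w z q (N + Suc k) (N - Suc k) (N - Suc k) (N + k)"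
      using pf_residue_geometric[OF wz \<open>q \<noteq> 0\<close>, of "N - Suc k" "N + N"] that
      by (simp add: Suc_diff_Suc)
    then have "s (N - Suc k) = w ^ N * z ^ Suc k *
                 poch_ratio w z q (N + Suc k) (N - Suc k) (N - Suc k) (N + k) *
                 (w\<^sup>2 * q ^ Suc k / (1 + w\<^sup>2 * q ^ Suc k))"
      unfolding factor[symmetric] by (simp add: s_def)
    then show ?thesis
      by (simp add: B_term_def field_simps)
  qed
  have "(\<Sum>i<N + N. s i) = (\<Sum>k<N. s (N - Suc k)) + (\<Sum>k<N. s (N + k))"
    by (simp only: sum.lessThan_add_split sum.nat_diff_reindex)
  also have "(\<Sum>k<N. s (N - Suc k)) = (\<Sum>k<N. w ^ N * (B_term w z q (Suc k) *
                 poch_ratio w z q (N + Suc k) (N - Suc k) (N - Suc k) (N + k)))"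
    by (rule sum.cong) (simp_all add: lower)
  also have "(\<Sum>k<N. s (N + k)) = (\<Sum>k<N. w ^ N *
                 (A_term w z q k * poch_ratio w z q (N - k) (N + k) (N + k) (N - Suc k)))"
    by (rule sum.cong) (metis lessThan_iff upper)+
  finally show ?thesis
    by (simp add: s_def finite_rhs_def power_add algebra_simps sum_distrib_left)
qed

theorem finite_identity:
  fixes q w z :: "'k::field"
  assumes wz: "w * z = 1" and "q \<noteq> 0" and inj: "inj_on (\<lambda>i. q ^ i) {..<N + N}"
    and upper: "\<And>k. k < N \<Longrightarrow> 1 + z\<^sup>2 * q ^ k \<noteq> 0"
    and lower: "\<And>k. k < N \<Longrightarrow> 1 + w\<^sup>2 * q ^ Suc k \<noteq> 0"
  shows "finite_lhs w z q N = finite_rhs w z q N"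
proof -
  have den: "1 - - (z\<^sup>2 / q ^ N) * q ^ i \<noteq> 0" if "i < N + N" for i
  proof (cases "i < N")
    case True
    define k where "k = N - Suc i"
    have "k < N" "i = N - Suc k" using True by (simp_all add: k_def)
    have "c * q ^ (N - Suc k) / q ^ N = c / q ^ Suc k" for c
      using \<open>k < N\<close> \<open>q \<noteq> 0\<close> by (simp add: power_diff field_simps)
    then have "1 / (1 - - (z\<^sup>2 / q ^ N) * q ^ i) = w\<^sup>2 * q ^ Suc k / (1 + w\<^sup>2 * q ^ Suc k)"
      using ratio_shift_inverse_square(2)[OF wz, of "q ^ Suc k"] \<open>q \<noteq> 0\<close> \<open>i = N - Suc k\<close>
      by simp
    moreover have "w\<^sup>2 * q ^ Suc k / (1 + w\<^sup>2 * q ^ Suc k) \<noteq> 0"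
      using lower[OF \<open>k < N\<close>] wz \<open>q \<noteq> 0\<close> by auto
    ultimately show ?thesis by (metis div_by_0)
  next
    case False
    then show ?thesis
      using upper[of "i - N"] that \<open>q \<noteq> 0\<close> by (simp add: power_diff field_simps)
  qed
  have "w ^ N * finite_lhs w z q N = w ^ N * finite_rhs w z q N"
    using partial_fractions[OF inj _ den, of w] \<open>q \<noteq> 0\<close>
      finite_lhs_as_product[OF wz \<open>q \<noteq> 0\<close>] finite_rhs_as_partial_fractions[OF wz \<open>q \<noteq> 0\<close>]
    by simp
  moreover have "w \<noteq> 0" using wz by auto
  ultimately show ?thesis by simp
qed


lemma fps_to_fls_prod: "fps_to_fls (\<Prod>i\<in>S. f i) = (\<Prod>i\<in>S. fps_to_fls (f i :: 'a::comm_ring_1 fps))"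
  by (induction S rule: infinite_finite_induct) (auto simp: fls_times_fps_to_fls)

lemma fps_to_fls_sum: "fps_to_fls (\<Sum>i\<in>S. f i) = (\<Sum>i\<in>S. fps_to_fls (f i :: 'a::comm_ring_1 fps))"
  by (induction S rule: infinite_finite_induct) auto

lemma fps_to_fls_inverse:
  "F $ 0 \<noteq> 0 \<Longrightarrow> fps_to_fls (inverse F) = inverse (fps_to_fls (F :: 'a::field fps))"
  by (simp add: fls_inverse_fps_to_fls subdegree_eq_0)

lemma fps_to_fls_divide:
  "G $ 0 \<noteq> 0 \<Longrightarrow> fps_to_fls (F / G) = fps_to_fls F / fps_to_fls (G :: 'a::field fps)"
  by (simp add: fps_divide_unit fls_times_fps_to_fls fps_to_fls_inverse divide_inverse)

lemma fps_prod_nth_0: "(\<Prod>i\<in>S. f i) $ 0 = (\<Prod>i\<in>S. f i $ 0 :: 'a::comm_ring_1)"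
  by (induction S rule: infinite_finite_induct) auto

lemma qpoch_nth_0: "qpoch x fps_X n $ 0 = (if n = 0 then 1 else 1 - x $ 0)"
proof -
  have "(1 - x * fps_X ^ m) $ 0 = (if m = 0 then 1 - x $ 0 else 1)" for m
    by simp
  then show ?thesis
    by (cases n) (simp_all add: qpoch_def fps_prod_nth_0 prod.lessThan_Suc_shift del: prod.lessThan_Suc)
qed

lemma fps_to_fls_qpoch: "fps_to_fls (qpoch x fps_X n) = qpoch (fps_to_fls x) fls_X n"
  by (simp add: qpoch_def fps_to_fls_prod fls_times_fps_to_fls fps_to_fls_power)

lemma fps_to_fls_poch_ratio:
  "fps_to_fls (poch_ratio w z fps_X a b c d :: 'a::field fps) =
     poch_ratio (fps_to_fls w) (fps_to_fls z) fls_X a b c d"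
  by (simp add: poch_ratio_def fps_to_fls_inverse qpoch_nth_0 fls_times_fps_to_fls fps_to_fls_qpoch)

lemma fps_to_fls_finite_lhs:
  assumes "1 + (z $ 0)\<^sup>2 \<noteq> 0"
  shows "fps_to_fls (finite_lhs w z fps_X N :: 'a::field fps) =
           finite_lhs (fps_to_fls w) (fps_to_fls z) fls_X N"
  using assms
  by (simp add: finite_lhs_def fps_to_fls_inverse qpoch_nth_0 fls_times_fps_to_fls fps_to_fls_qpoch
                fps_to_fls_power power2_eq_square)

lemma fps_to_fls_finite_rhs:
  assumes "1 + (z $ 0)\<^sup>2 \<noteq> 0"
  shows "fps_to_fls (finite_rhs w z fps_X N :: 'a::field fps) =
           finite_rhs (fps_to_fls w) (fps_to_fls z) fls_X N"
proof -
  have "(1 + z\<^sup>2 * fps_X ^ k) $ 0 \<noteq> 0" "(1 + w\<^sup>2 * fps_X ^ Suc k) $ 0 \<noteq> 0" for k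
    using assms by (simp_all add: power2_eq_square)
  then show ?thesis
    by (simp add: finite_rhs_def A_term_def B_term_def fps_to_fls_sum fps_to_fls_inverse
                  fls_times_fps_to_fls fps_to_fls_power fps_to_fls_poch_ratio)
qed

lemma fls_X_inv_square_plus_1_nonzero: "1 + (fls_X_inv :: 'a::field fls)\<^sup>2 \<noteq> 0"
proof
  assume "1 + (fls_X_inv :: 'a fls)\<^sup>2 = 0"
  then have "(1 + (fls_X_inv :: 'a fls)\<^sup>2) $$ (-2) = 0" by simp
  then show False by (simp add: fls_X_inv_power_conv_shift_1)
qed

lemma fls_X_square_plus_1_nonzero: "1 + (fls_X :: 'a::field fls)\<^sup>2 \<noteq> 0"
proof
  assume "1 + (fls_X :: 'a fls)\<^sup>2 = 0"
  then have "(1 + (fls_X :: 'a fls)\<^sup>2) $$ 0 = 0" by simp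
  then show False by simp
qed

lemma fls_X_times_X_inv: "fls_X * fls_X_inv = (1 :: 'a::field fls)"
  by (metis fls_inverse_X fls_X_nonzero right_inverse)

lemma fls_X_neq_1: "(fls_X :: 'a::field fls) \<noteq> 1"
  by (metis fls_X_subdegree fls_one_subdegree zero_neq_one)

lemma zpow_nth_0: "zpow k $ 0 = fls_X_inv powi k"
  by (simp add: zpow_def)

lemma fps_to_fls_zpow: "fps_to_fls (zpow k) = fls_const (fls_X_inv powi k)"
  by (simp add: zpow_def)

lemma zpow_minus_1: "zpow (-1) = fps_const fls_X"
  by (simp add: zpow_def power_int_minus fls_inverse_X[symmetric])

lemma zpow_1: "zpow 1 = fps_const fls_X_inv"
  by (simp add: zpow_def)

lemma zpow_minus_nat: "zpow (- int k) = zpow (-1) ^ k"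
  by (simp add: zpow_def zpow_minus_1 fps_const_power power_int_minus power_inverse flip: fls_inverse_X)

lemma zpow_nat: "zpow (int k) = zpow 1 ^ k"
  by (simp add: zpow_def fps_const_power)

lemma zpow_add: "zpow (a + b) = zpow a * zpow b"
  by (simp add: zpow_def power_int_add)

lemma zpow_2: "zpow 2 = zpow 1 ^ 2" "zpow (-2) = zpow (-1) ^ 2"
  using zpow_nat[of 2] zpow_minus_nat[of 2] by simp_all

theorem finite_identity_fps:
  "finite_lhs (zpow (-1)) (zpow 1) fps_X N = finite_rhs (zpow (-1)) (zpow 1) (fps_X :: 'a::field fls fps) N"
proof -
  let ?w = "fls_const fls_X :: 'a fls fls" and ?z = "fls_const fls_X_inv :: 'a fls fls"
  have wz: "?w * ?z = 1"
    by (simp add: fls_X_times_X_inv)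
  have nz: "fps_to_fls F \<noteq> 0" if "F $ 0 \<noteq> 0" for F :: "'a fls fps"
    using that by auto
  have "1 + ?z\<^sup>2 * fls_X ^ k \<noteq> 0" for k
    using nz[of "1 + zpow 1 ^ 2 * fps_X ^ k"] fls_X_inv_square_plus_1_nonzero[where 'a='a]
    by (simp add: fps_to_fls_zpow fls_times_fps_to_fls fps_to_fls_power fls_const_power zpow_nth_0
                  fps_nth_power_0 power_0_left)
  moreover have "1 + ?w\<^sup>2 * fls_X ^ Suc k \<noteq> 0" for k
    using nz[of "1 + zpow (-1) ^ 2 * fps_X ^ Suc k"]
    by (simp add: zpow_minus_1 fls_times_fps_to_fls fps_to_fls_power fls_const_power del: power_Suc)
  moreover have "inj_on (\<lambda>i. (fls_X :: 'a fls fls) ^ i) {..<N + N}"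
    by (rule inj_onI) (metis fls_subdegree_fls_X_pow of_nat_eq_iff)
  ultimately have "finite_lhs ?w ?z fls_X N = finite_rhs ?w ?z fls_X N"
    by (intro finite_identity[OF wz]) auto
  moreover have "fps_to_fls (zpow (-1) :: 'a fls fps) = ?w" "fps_to_fls (zpow 1 :: 'a fls fps) = ?z"
    by (simp_all add: zpow_minus_1 fps_to_fls_zpow)
  moreover have "1 + (zpow 1 $ 0 :: 'a fls)\<^sup>2 \<noteq> 0"
    using fls_X_inv_square_plus_1_nonzero by (simp add: zpow_nth_0)
  ultimately show ?thesis
    by (metis fps_to_fls_finite_lhs fps_to_fls_finite_rhs fps_to_fls_eq_iff)
qed


section \<open>Infinite \<open>q\<close>-Pochhammer products\<close>

definition qpoch_inf :: "'a::field fls fps \<Rightarrow> 'a fls fps" where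
  "qpoch_inf x = qz_prodinf (\<lambda>m. 1 - x * fps_X ^ m)"

lemma qz_prodinf_eq_qpoch_inf:
  assumes "\<And>m. f m = 1 - x * fps_X ^ m"
  shows "qz_prodinf f = qpoch_inf x"
proof -
  have "f = (\<lambda>m. 1 - x * fps_X ^ m)"
    using assms by auto
  then show ?thesis
    by (simp add: qpoch_inf_def)
qed

lemma eq_below_qpoch_inf: "eq_below N (qpoch x fps_X N) (qpoch_inf x)"
  unfolding qpoch_def qpoch_inf_def
proof (rule eq_below_qz_prodinf)
  fix j
  show "eq_below j (1 - x * fps_X ^ j) 1"
    using eq_below_diff[OF eq_below_refl eq_below_mult_X_power[of j j x]] by simp
qed

lemma qpoch_inf_nth_0: "qpoch_inf x $ 0 = 1 - x $ 0"
  using eq_below_qpoch_inf[of 1 x] by (simp add: eq_below_def qpoch_nth_0)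

lemma qpoch_inf_unfold: "qpoch_inf x = (1 - x) * qpoch_inf (x * fps_X)"
proof (rule eq_below_all_imp_eq)
  fix N
  have "qpoch x fps_X (Suc N) = (1 - x) * qpoch (x * fps_X) fps_X N"
    by (simp add: qpoch_def prod.lessThan_Suc_shift mult.assoc del: prod.lessThan_Suc)
  then have "eq_below N (qpoch x fps_X (Suc N)) ((1 - x) * qpoch_inf (x * fps_X))"
    by (simp add: eq_below_mult eq_below_qpoch_inf)
  moreover have "eq_below N (qpoch x fps_X (Suc N)) (qpoch_inf x)"
    by (rule eq_below_mono[OF eq_below_qpoch_inf]) simp
  ultimately show "eq_below N (qpoch_inf x) ((1 - x) * qpoch_inf (x * fps_X))"
    by (metis eq_below_sym eq_below_trans)
qed

lemma ord_above_line_qpoch: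
  fixes x :: "'a::field fls fps"
  assumes "ord_above_line x 0 s" "s \<ge> 0"
  shows "ord_above_line (qpoch x fps_X n) 0 s"
  unfolding qpoch_def
proof (intro ord_above_line_prod ord_above_line_diff ord_above_line_1 order_refl)
  fix m
  have "ord_above_line (fps_const (1 :: 'a fls) * fps_X ^ m) 0 s"
    using assms(2) by (intro ord_above_line_monom) (simp add: fls_ord_ge_iff)
  then show "ord_above_line (x * fps_X ^ m) 0 s"
    using ord_above_line_mult[OF assms(1)] by fastforce
qed

definition poch_ratio_inf :: "'a::field fls fps \<Rightarrow> 'a fls fps \<Rightarrow> 'a fls fps" where
  "poch_ratio_inf w z =
     qpoch_inf w * qpoch_inf (z * fps_X) * inverse (qpoch_inf fps_X * qpoch_inf fps_X)"

lemma eq_below_poch_ratio: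
  assumes "L \<le> a" "L \<le> b" "L \<le> c" "L \<le> d"
  shows "eq_below L (poch_ratio w z fps_X a b c d) (poch_ratio_inf w z)"
  unfolding poch_ratio_def poch_ratio_inf_def
  by (intro eq_below_mult eq_below_inverse eq_below_mono[OF eq_below_qpoch_inf] assms)
     (simp add: qpoch_nth_0)

lemma eq_below_A_term: "eq_below r (A_term w z fps_X r) (w ^ r :: 'a::field fps)"
proof (cases r)
  case (Suc r')
  have "eq_below r (1 + z\<^sup>2 * fps_X ^ r) 1"
    using eq_below_add[OF eq_below_refl eq_below_mult_X_power[of r r "z\<^sup>2"]] by simp
  then have "eq_below r (inverse (1 + z\<^sup>2 * fps_X ^ r)) (inverse 1)"
    by (rule eq_below_inverse) (simp add: Suc)
  from eq_below_mult[OF eq_below_refl[of r "w ^ r"] this] show ?thesis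
    by (simp add: A_term_def)
qed (simp add: eq_below_def)

lemma eq_below_B_term: "eq_below r (B_term w z fps_X r) (0 :: 'a::field fps)"
  using eq_below_mult_zero(1)[of r "fps_X ^ r" "z ^ r * w\<^sup>2 * inverse (1 + w\<^sup>2 * fps_X ^ r)"]
    eq_below_mult_X_power[of r r 1]
  by (simp add: B_term_def mult.assoc)


section \<open>Passage to the limit\<close>

abbreviation A_q :: "nat \<Rightarrow> 'a::field fls fps" where
  "A_q \<equiv> A_term (zpow (-1)) (zpow 1) fps_X"

abbreviation B_q :: "nat \<Rightarrow> 'a::field fls fps" where
  "B_q \<equiv> B_term (zpow (-1)) (zpow 1) fps_X"

abbreviation ratio_q :: "nat \<Rightarrow> nat \<Rightarrow> nat \<Rightarrow> nat \<Rightarrow> 'a::field fls fps" where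
  "ratio_q \<equiv> poch_ratio (zpow (-1)) (zpow 1) fps_X"

abbreviation ratio_q_inf :: "'a::field fls fps" where
  "ratio_q_inf \<equiv> poch_ratio_inf (zpow (-1)) (zpow 1)"

lemma ord_above_line_ratio_q: "ord_above_line (ratio_q a b c d :: 'a::field fls fps) 0 2"
proof -
  have "ord_above_line (zpow (-1) :: 'a fls fps) 0 2"
    by (simp add: zpow_minus_1 ord_above_line_const fls_ord_ge_iff)
  moreover have "ord_above_line (zpow 1 * fps_X :: 'a fls fps) 0 2"
    using ord_above_line_monom[of fls_X_inv 2 1] by (simp add: zpow_1 fls_ord_ge_iff)
  moreover have "ord_above_line (fps_X :: 'a fls fps) 0 2"
    using ord_above_line_monom[of "1 :: 'a fls" 2 1] by (simp add: fls_ord_ge_iff)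
  moreover have "ord_above_line (qpoch fps_X fps_X c * qpoch fps_X fps_X d :: 'a fls fps) 0 2"
    using ord_above_line_mult[OF ord_above_line_qpoch ord_above_line_qpoch, of "fps_X :: 'a fls fps"]
      \<open>ord_above_line fps_X 0 2\<close> by simp
  ultimately have "ord_above_line (qpoch (zpow (-1)) fps_X a * qpoch (zpow 1 * fps_X) fps_X b
                     * inverse (qpoch fps_X fps_X c * qpoch fps_X fps_X d) :: 'a fls fps) (0 + 0 + 0) 2"
    by (intro ord_above_line_mult ord_above_line_qpoch ord_above_line_inverse)
       (simp_all add: qpoch_nth_0)
  then show ?thesis
    by (simp add: poch_ratio_def)
qed

lemma ord_above_line_ratio_q_inf: "ord_above_line (ratio_q_inf :: 'a::field fls fps) 0 2"
  by (rule ord_above_line_limit[of "\<lambda>N. ratio_q N N N N"])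
     (simp_all add: eq_below_poch_ratio ord_above_line_ratio_q)

lemma ord_above_line_A_q: "r \<ge> 1 \<Longrightarrow> ord_above_line (A_q r :: 'a::field fls fps) (int r) 2"
proof -
  assume "r \<ge> 1"
  have "ord_above_line (1 + fps_const (fls_X_inv\<^sup>2) * fps_X ^ r :: 'a fls fps) 0 2"
    using \<open>r \<ge> 1\<close>
    by (intro ord_above_line_add ord_above_line_1 ord_above_line_monom) (simp_all add: fls_ord_ge_iff)
  then have "ord_above_line (fps_const (fls_X ^ r) * inverse (1 + fps_const (fls_X_inv\<^sup>2) * fps_X ^ r)
               :: 'a fls fps) (int r + 0) 2"
    using \<open>r \<ge> 1\<close>
    by (intro ord_above_line_mult ord_above_line_const ord_above_line_inverse)
       (simp_all add: fls_ord_ge_X_power)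
  then show ?thesis
    by (simp add: A_term_def zpow_minus_1 zpow_1 fps_const_power)
qed

lemma fls_X_geometric_sum:
  "(\<Sum>k<N. fls_X ^ Suc k) = fls_X / (1 - fls_X) - fls_X ^ Suc N / (1 - (fls_X :: 'a::field fls))"
proof -
  have "(1 - fls_X :: 'a fls) \<noteq> 0"
    using fls_X_neq_1 by simp
  have "(\<Sum>k<N. fls_X ^ Suc k) = fls_X * (\<Sum>k<N. fls_X ^ k :: 'a fls)"
    by (simp add: sum_distrib_left)
  also have "\<dots> = fls_X * (1 - fls_X ^ N) / (1 - fls_X)"
    using \<open>1 - fls_X \<noteq> 0\<close> by (simp add: sum_gp_strict)
  also have "\<dots> = fls_X / (1 - fls_X) - fls_X ^ Suc N / (1 - fls_X)"
    by (simp only: right_diff_distrib diff_divide_distrib) simp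
  finally show ?thesis .
qed

lemma fls_ord_ge_geometric_tail: "fls_ord_ge (fls_X ^ Suc N / (1 - fls_X) :: 'a::field fls) (int (Suc N))"
proof -
  have "inverse (1 - fls_X :: 'a fls) = fps_to_fls (inverse (1 - fps_X))"
    by (simp add: fps_to_fls_inverse)
  then have "fls_ord_ge (inverse (1 - fls_X) :: 'a fls) 0"
    by (simp add: fls_ord_ge_iff fls_subdegree_fls_to_fps_gt0)
  from fls_ord_ge_mult[OF fls_ord_ge_X_power[of "Suc N"] this] show ?thesis
    by (simp add: divide_inverse)
qed

lemma qz_tendsto_geometric:
  "qz_tendsto (\<lambda>N. \<Sum>k<N. fps_const (fls_X ^ Suc k)) (fps_const (fls_X / (1 - fls_X)) :: 'a::field fls fps)"
  unfolding qz_tendsto_iff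
proof (intro allI)
  fix n d
  have const_sum: "(\<Sum>k<N. fps_const (f k)) = fps_const (\<Sum>k<N. f k :: 'a fls)" for f and N :: nat
    by (induction N) simp_all
  have diff: "(\<Sum>k<N. fps_const (fls_X ^ Suc k)) - fps_const (fls_X / (1 - fls_X)) =
                     fps_const (- (fls_X ^ Suc N / (1 - fls_X)) :: 'a fls)" for N
    by (simp only: const_sum fls_X_geometric_sum) simp
  show "\<forall>\<^sub>F N in sequentially. ord_ge_upto n (int d)
    ((\<Sum>k<N. fps_const (fls_X ^ Suc k)) - fps_const (fls_X / (1 - fls_X) :: 'a fls))"
  proof (rule eventually_sequentiallyI)
    fix N assume "d \<le> N"
    then have "fls_ord_ge (- (fls_X ^ Suc N / (1 - fls_X)) :: 'a fls) (int d)"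
      using fls_ord_ge_geometric_tail[of N] by (intro fls_ord_ge_uminus) (auto elim: fls_ord_ge_mono)
    then show "ord_ge_upto n (int d)
      ((\<Sum>k<N. fps_const (fls_X ^ Suc k)) - fps_const (fls_X / (1 - fls_X) :: 'a fls))"
      unfolding diff by (rule ord_ge_upto_const)
  qed
qed

lemma qz_tendsto_series:
  "qz_tendsto (\<lambda>N. \<Sum>k<N. A_q (Suc k) + B_q (Suc k))
     (qz_suminf (\<lambda>k. A_q (Suc k) + B_q (Suc k)) :: 'a::field fls fps)"
proof -
  define v :: "nat \<Rightarrow> 'a fls fps" where "v k = A_q (Suc k) + B_q (Suc k) - fps_const (fls_X ^ Suc k)" for k
  have "eq_below (Suc k) (v k) 0" for k
    using eq_below_add[OF eq_below_A_term[of "Suc k" "zpow (-1)" "zpow 1"]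
                          eq_below_B_term[of "Suc k" "zpow (-1)" "zpow 1"]]
    by (simp add: v_def eq_below_iff_diff[symmetric] zpow_minus_1 fps_const_power)
  then have "eq_below N (\<Sum>k<N. v k) (qz_suminf v)" for N
    by (intro eq_below_qz_suminf) (meson eq_below_mono le_SucI order_refl)
  then have "qz_tendsto (\<lambda>N. (\<Sum>k<N. fps_const (fls_X ^ Suc k)) + (\<Sum>k<N. v k))
               (fps_const (fls_X / (1 - fls_X)) + qz_suminf v)"
    by (intro qz_tendsto_add qz_tendsto_geometric qz_tendsto_if_eq_below)
  then have "qz_tendsto (\<lambda>N. \<Sum>k<N. A_q (Suc k) + B_q (Suc k))
               (fps_const (fls_X / (1 - fls_X)) + qz_suminf v)"
    by (simp add: v_def flip: sum.distrib)
  then show ?thesis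
    unfolding qz_suminf_def by (simp add: qz_lim_eq)
qed

lemma ord_ge_upto_lower_sum:
  assumes "N \<ge> d + 3 * n + 2"
  shows "ord_ge_upto n (int d)
           (\<Sum>k<N. A_q k * (ratio_q (N - k) (N + k) (N + k) (N - Suc k) - ratio_q_inf) :: 'a::field fls fps)"
proof (rule ord_ge_upto_sum)
  fix k assume "k \<in> {..<N}"
  let ?R = "ratio_q (N - k) (N + k) (N + k) (N - Suc k) - ratio_q_inf :: 'a fls fps"
  show "ord_ge_upto n (int d) (A_q k * ?R)"
  proof (cases "n < N - Suc k")
    case True
    have "eq_below (N - Suc k) ?R 0"
      by (subst eq_below_iff_diff[symmetric]) (simp add: eq_below_poch_ratio)
    then show ?thesis
      using True by (intro ord_ge_upto_if_eq_below eq_below_mult_zero(2))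
  next
    case False
    then have "k \<ge> 1" "int d \<le> int k + 0 - 2 * int n"
      using assms by linarith+
    moreover have "ord_above_line ?R 0 2"
      by (intro ord_above_line_diff ord_above_line_ratio_q ord_above_line_ratio_q_inf)
    ultimately show ?thesis
      by (intro ord_ge_upto_if_above_line[of _ "int k + 0" 2] ord_above_line_mult ord_above_line_A_q)
         simp_all
  qed
qed

lemma ord_ge_upto_upper_sum:
  assumes "N \<ge> 2 * n + 2"
  shows "ord_ge_upto n d (\<Sum>k<N. B_q (Suc k) *
           (ratio_q (N + Suc k) (N - Suc k) (N - Suc k) (N + k) - ratio_q_inf) :: 'a::field fls fps)"
proof (rule ord_ge_upto_sum)
  fix k assume "k \<in> {..<N}"
  let ?R = "ratio_q (N + Suc k) (N - Suc k) (N - Suc k) (N + k) - ratio_q_inf :: 'a fls fps"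
  show "ord_ge_upto n d (B_q (Suc k) * ?R)"
  proof (cases "n \<le> k")
    case True
    then show ?thesis
      by (intro ord_ge_upto_if_eq_below[of "Suc k"] eq_below_mult_zero(1) eq_below_B_term) simp
  next
    case False
    have "eq_below (N - Suc k) ?R 0"
      by (subst eq_below_iff_diff[symmetric]) (simp add: eq_below_poch_ratio)
    moreover have "n < N - Suc k"
      using False assms by linarith
    ultimately show ?thesis
      by (intro ord_ge_upto_if_eq_below eq_below_mult_zero(2))
  qed
qed

lemma finite_rhs_q_minus:
  fixes S :: "'a::field fls fps"
  shows "finite_rhs (zpow (-1)) (zpow 1) fps_X N - ratio_q_inf * (A_q 0 + S) =
           fps_const (fls_X ^ N)
         + (\<Sum>k<N. A_q k * (ratio_q (N - k) (N + k) (N + k) (N - Suc k) - ratio_q_inf))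
         + (\<Sum>k<N. B_q (Suc k) * (ratio_q (N + Suc k) (N - Suc k) (N - Suc k) (N + k) - ratio_q_inf))
         + ratio_q_inf * ((\<Sum>k<N. A_q (Suc k) + B_q (Suc k)) - S)
         - ratio_q_inf * A_q N"
proof -
  have split: "(\<Sum>k<N. f k * (g k - c)) = (\<Sum>k<N. f k * g k) - c * (\<Sum>k<N. f k)"
    for f g :: "nat \<Rightarrow> 'a fls fps" and c
    by (simp add: right_diff_distrib sum_subtractf sum_distrib_left mult.commute)
  have A: "(\<Sum>k<N. A_q k) = A_q 0 + (\<Sum>k<N. A_q (Suc k)) - (A_q N :: 'a fls fps)"
    using sum.lessThan_Suc[of A_q N] sum.lessThan_Suc_shift[of A_q N] by (simp add: algebra_simps)
  have w: "zpow (-1) ^ N = (fps_const (fls_X ^ N) :: 'a fls fps)"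
    by (simp add: zpow_minus_1 fps_const_power)
  show ?thesis
    unfolding finite_rhs_def split sum.distrib A w by (simp add: algebra_simps)
qed

lemma ord_ge_upto_finite_rhs_minus_limit:
  fixes S :: "'a::field fls fps"
  assumes S: "ord_ge_upto n (int (d + 2 * n)) ((\<Sum>k<N. A_q (Suc k) + B_q (Suc k)) - S)"
    and N: "N \<ge> d + 3 * n + 2"
  shows "ord_ge_upto n (int d) (finite_rhs (zpow (-1)) (zpow 1) fps_X N - ratio_q_inf * (A_q 0 + S))"
proof -
  have "ord_ge_upto n (int d) (fps_const (fls_X ^ N) :: 'a fls fps)"
    using N by (intro ord_ge_upto_const fls_ord_ge_mono[OF fls_ord_ge_X_power]) simp
  moreover have "ord_ge_upto n (int d) (ratio_q_inf * ((\<Sum>k<N. A_q (Suc k) + B_q (Suc k)) - S))"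
    using ord_ge_upto_mult[OF S ord_above_line_ratio_q_inf] by simp
  moreover have "ord_ge_upto n (int d) (ratio_q_inf * A_q N :: 'a fls fps)"
    using N by (intro ord_ge_upto_if_above_line[of _ "0 + int N" 2] ord_above_line_mult
                      ord_above_line_ratio_q_inf ord_above_line_A_q) simp_all
  ultimately show ?thesis
    unfolding finite_rhs_q_minus using N
    by (intro ord_ge_upto_add ord_ge_upto_diff ord_ge_upto_lower_sum ord_ge_upto_upper_sum) simp_all
qed

lemma qz_tendsto_finite_rhs:
  "qz_tendsto (finite_rhs (zpow (-1)) (zpow 1) fps_X)
     (ratio_q_inf * (A_q 0 + qz_suminf (\<lambda>k. A_q (Suc k) + B_q (Suc k))) :: 'a::field fls fps)"
  unfolding qz_tendsto_iff
proof (intro allI)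
  fix n d
  have "\<forall>\<^sub>F N in sequentially. ord_ge_upto n (int (d + 2 * n))
          ((\<Sum>k<N. A_q (Suc k) + B_q (Suc k)) - qz_suminf (\<lambda>k. A_q (Suc k) + B_q (Suc k)) :: 'a fls fps)"
    using qz_tendsto_series unfolding qz_tendsto_iff by blast
  moreover have "\<forall>\<^sub>F N in sequentially. N \<ge> d + 3 * n + 2"
    by (rule eventually_ge_at_top)
  ultimately show "\<forall>\<^sub>F N in sequentially. ord_ge_upto n (int d) (finite_rhs (zpow (-1)) (zpow 1) fps_X N
                     - ratio_q_inf * (A_q 0 + qz_suminf (\<lambda>k. A_q (Suc k) + B_q (Suc k))) :: 'a fls fps)"
    by eventually_elim (rule ord_ge_upto_finite_rhs_minus_limit)
qed

lemma qz_tendsto_finite_lhs: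
  "qz_tendsto (finite_lhs (zpow (-1)) (zpow 1) fps_X)
     (qpoch_inf (- zpow 1) * qpoch_inf (- (zpow (-1) * fps_X))
      * inverse (qpoch_inf (- (zpow 1)\<^sup>2) * qpoch_inf (- ((zpow (-1))\<^sup>2 * fps_X))) :: 'a::field fls fps)"
proof (rule qz_tendsto_if_eq_below)
  fix N
  have "(qpoch (- (zpow 1)\<^sup>2) fps_X N * qpoch (- ((zpow (-1))\<^sup>2 * fps_X)) fps_X N :: 'a fls fps) $ 0 \<noteq> 0"
    using fls_X_inv_square_plus_1_nonzero[where 'a='a]
    by (simp add: qpoch_nth_0 zpow_nth_0 fps_nth_power_0)
  then show "eq_below N (finite_lhs (zpow (-1)) (zpow 1) fps_X N)
      (qpoch_inf (- zpow 1) * qpoch_inf (- (zpow (-1) * fps_X))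
       * inverse (qpoch_inf (- (zpow 1)\<^sup>2) * qpoch_inf (- ((zpow (-1))\<^sup>2 * fps_X))) :: 'a fls fps)"
    unfolding finite_lhs_def by (intro eq_below_mult eq_below_inverse eq_below_qpoch_inf)
qed

theorem limit_identity:
  "qpoch_inf (- zpow 1) * qpoch_inf (- (zpow (-1) * fps_X))
     / ((1 + (zpow 1)\<^sup>2) * (qpoch_inf (- ((zpow 1)\<^sup>2 * fps_X)) * qpoch_inf (- ((zpow (-1))\<^sup>2 * fps_X))))
   = qpoch_inf (zpow (-1)) * qpoch_inf (zpow 1 * fps_X) / (qpoch_inf fps_X * qpoch_inf fps_X)
     * (1 / (1 + (zpow 1)\<^sup>2) + qz_suminf (\<lambda>k. A_q (Suc k) + B_q (Suc k)) :: 'a::field fls fps)"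
proof -
  have "finite_lhs (zpow (-1)) (zpow 1) fps_X = (finite_rhs (zpow (-1)) (zpow 1) fps_X :: nat \<Rightarrow> 'a fls fps)"
    by (rule ext) (rule finite_identity_fps)
  then have "qpoch_inf (- zpow 1) * qpoch_inf (- (zpow (-1) * fps_X))
      * inverse (qpoch_inf (- (zpow 1)\<^sup>2) * qpoch_inf (- ((zpow (-1))\<^sup>2 * fps_X)))
    = ratio_q_inf * (A_q 0 + qz_suminf (\<lambda>k. A_q (Suc k) + B_q (Suc k)) :: 'a fls fps)"
    using qz_tendsto_finite_rhs by (intro qz_tendsto_unique[OF qz_tendsto_finite_lhs]) simp
  moreover have "qpoch_inf (- (zpow 1)\<^sup>2) = (1 + (zpow 1)\<^sup>2) * qpoch_inf (- ((zpow 1)\<^sup>2 * fps_X :: 'a fls fps))"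
    by (subst qpoch_inf_unfold) simp
  moreover have "(1 + (zpow 1)\<^sup>2 :: 'a fls fps) $ 0 \<noteq> 0"
    using fls_X_inv_square_plus_1_nonzero by (simp add: zpow_nth_0 fps_nth_power_0)
  ultimately show ?thesis
    by (simp add: fps_divide_unit qpoch_inf_nth_0 poch_ratio_inf_def A_term_def mult.assoc)
qed


lemma series_term_eq:
  "zpow (- int r) / (1 + zpow 2 * fps_X ^ r) + fps_X ^ r * zpow (int r - 2) / (1 + zpow (-2) * fps_X ^ r)
     = A_q r + (B_q r :: 'a::field fls fps)"
proof -
  have "zpow (int r - 2) = (zpow 1 ^ r * zpow (-1) ^ 2 :: 'a fls fps)"
    using zpow_add[of "int r" "-2", where 'a='a] by (simp add: zpow_nat zpow_2)
  moreover have "(1 + zpow 1 ^ 2 * fps_X ^ r :: 'a fls fps) $ 0 \<noteq> 0"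
    using fls_X_inv_square_plus_1_nonzero[where 'a='a]
    by (simp add: zpow_nth_0 fps_nth_power_0 power_0_left)
  moreover have "(1 + zpow (-1) ^ 2 * fps_X ^ r :: 'a fls fps) $ 0 \<noteq> 0"
    using fls_X_square_plus_1_nonzero[where 'a='a] by (simp add: zpow_minus_1 power_0_left)
  ultimately show ?thesis
    by (simp add: A_term_def B_term_def zpow_minus_nat zpow_2 fps_divide_unit mult_ac)
qed

lemma fps_solve_for_quotient:
  fixes a b c d p s :: "'a::field fps"
  assumes eq: "a / (c * p) = b / d * (1 / c + s)"
    and units: "b $ 0 \<noteq> 0" "c $ 0 \<noteq> 0" "d $ 0 \<noteq> 0" "p $ 0 \<noteq> 0"
  shows "a / b = p / d * (1 + c * s)"
proof -
  from arg_cong[OF eq, of fps_to_fls] units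
  have "fps_to_fls a / (fps_to_fls c * fps_to_fls p) =
          fps_to_fls b / fps_to_fls d * (1 / fps_to_fls c + fps_to_fls s)"
    by (simp add: fps_to_fls_divide fls_times_fps_to_fls)
  moreover have "fps_to_fls b \<noteq> 0" "fps_to_fls c \<noteq> 0" "fps_to_fls d \<noteq> 0" "fps_to_fls p \<noteq> 0"
    using units by auto
  ultimately have "fps_to_fls a / fps_to_fls b = fps_to_fls p / fps_to_fls d * (1 + fps_to_fls c * fps_to_fls s)"
    by (simp add: field_simps)
  then show ?thesis
    using units by (simp add: fps_to_fls_divide fls_times_fps_to_fls flip: fps_to_fls_eq_iff)
qed

theorem corollary3:
  fixes q :: "'a::field_char_0 fls fps"
  defines "q \<equiv> fps_X"
  shows
  "(qz_prodinf (\<lambda>i. 1 + zpow 1 * q ^ i) * qz_prodinf (\<lambda>i. 1 + zpow (-1) * q ^ (i + 1)))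
     / (qz_prodinf (\<lambda>i. 1 - zpow (-1) * q ^ i) * qz_prodinf (\<lambda>i. 1 - zpow 1 * q ^ (i + 1)))
   = (qz_prodinf (\<lambda>i. 1 + zpow 2 * q ^ (i + 1)) * qz_prodinf (\<lambda>i. 1 + zpow (-2) * q ^ (i + 1)))
       / (qz_prodinf (\<lambda>i. 1 - q ^ (i + 1))) ^ 2
     * (1 + (1 + zpow 2) * qz_suminf (\<lambda>k. let r = k + 1 in
          zpow (- int r) / (1 + zpow 2 * q ^ r)
          + q ^ r * zpow (int r - 2) / (1 + zpow (-2) * q ^ r)))"
proof -
  let ?w = "zpow (-1) :: 'a fls fps" and ?z = "zpow 1 :: 'a fls fps"
  have products:
    "qz_prodinf (\<lambda>i. 1 + zpow 1 * q ^ i) = qpoch_inf (- ?z)"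
    "qz_prodinf (\<lambda>i. 1 + zpow (-1) * q ^ (i + 1)) = qpoch_inf (- (?w * fps_X))"
    "qz_prodinf (\<lambda>i. 1 - zpow (-1) * q ^ i) = qpoch_inf ?w"
    "qz_prodinf (\<lambda>i. 1 - zpow 1 * q ^ (i + 1)) = qpoch_inf (?z * fps_X)"
    "qz_prodinf (\<lambda>i. 1 + zpow 2 * q ^ (i + 1)) = qpoch_inf (- (?z\<^sup>2 * fps_X))"
    "qz_prodinf (\<lambda>i. 1 + zpow (-2) * q ^ (i + 1)) = qpoch_inf (- (?w\<^sup>2 * fps_X))"
    "qz_prodinf (\<lambda>i. 1 - q ^ (i + 1)) = qpoch_inf fps_X"
    by (intro qz_prodinf_eq_qpoch_inf; simp add: q_def zpow_2 mult_ac)+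
  have series: "(\<lambda>k. let r = k + 1 in zpow (- int r) / (1 + zpow 2 * q ^ r)
                  + q ^ r * zpow (int r - 2) / (1 + zpow (-2) * q ^ r)) = (\<lambda>k. A_q (Suc k) + B_q (Suc k))"
    by (simp add: q_def series_term_eq)
  have "(qpoch_inf ?w * qpoch_inf (?z * fps_X)) $ 0 \<noteq> 0" "(1 + ?z\<^sup>2) $ 0 \<noteq> 0"
    "(qpoch_inf fps_X * qpoch_inf fps_X :: 'a fls fps) $ 0 \<noteq> 0"
    "(qpoch_inf (- (?z\<^sup>2 * fps_X)) * qpoch_inf (- (?w\<^sup>2 * fps_X))) $ 0 \<noteq> 0"
    using fls_X_inv_square_plus_1_nonzero[where 'a='a] fls_X_neq_1[where 'a='a]
    by (auto simp: qpoch_inf_nth_0 zpow_nth_0 zpow_minus_1 fps_nth_power_0)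
  from fps_solve_for_quotient[OF limit_identity this] show ?thesis
    unfolding products series unfolding zpow_2 power2_eq_square[of "qpoch_inf fps_X :: 'a fls fps"] .
qed

end
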